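(* Let $D=(V,A)$ be a digraph, let $C\subseteq V$ be a clique-cutset of $D$, and let $B,B'$ be a bipartition of $V\setminus C$ such that $B$ is the vertex set of a connected component of $D[V\setminus C]$. Suppose there exist subsets $K_1,\dots,K_{|C|+1}$ of $V$ such that for every $i\in\{1,\ldots,|C|+1\}$, $K_i$ is a kernel of $D\left[B\cup\left(C\setminus\bigcup_{j=1}^{i-1}K_j\right)\right]$, and suppose that $D\left[B'\cup\left(C\cap\bigcup_{j=1}^{|C|}K_j\right)\right]$ has a kernel $K$. Then there exists $i\in\{1,\ldots,|C|+1\}$ such that $K\cup K_i$ is a kernel of $D$.
   Context: For a digraph $D=(V,A)$, $D[W]$ denotes the subdigraph induced by $W\subseteq V$. A set $S\subseteq V$ is stable if no two vertices of $S$ are adjacent (joined by an arc in either direction), and absorbing if for every $u\in V\setminus S$ there is $v\in S$ with $(u,v)\in A$; a kernel is a set that is both stable and absorbing. A clique-cutset of $D$ is a set $C\subseteq V$ such that the vertices of $C$ are pairwise adjacent and $D[V\setminus C]$ is disconnected. *)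

theory Defs
  imports Main
begin

definition digraph :: "'a set \<Rightarrow> ('a \<times> 'a) set \<Rightarrow> bool" where
  "digraph V A \<longleftrightarrow> finite V \<and> A \<subseteq> V \<times> V \<and> (\<forall>v. (v, v) \<notin> A)"

definition adj :: "('a \<times> 'a) set \<Rightarrow> 'a \<Rightarrow> 'a \<Rightarrow> bool" where
  "adj A u v \<longleftrightarrow> (u, v) \<in> A \<or> (v, u) \<in> A"

definition induced_arcs :: "('a \<times> 'a) set \<Rightarrow> 'a set \<Rightarrow> ('a \<times> 'a) set" where
  "induced_arcs A W = A \<inter> (W \<times> W)"

definition stable :: "('a \<times> 'a) set \<Rightarrow> 'a set \<Rightarrow> bool" where
  "stable A S \<longleftrightarrow> (\<forall>u\<in>S. \<forall>v\<in>S. \<not> adj A u v)"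

definition absorbing :: "'a set \<Rightarrow> ('a \<times> 'a) set \<Rightarrow> 'a set \<Rightarrow> bool" where
  "absorbing V A S \<longleftrightarrow> S \<subseteq> V \<and> (\<forall>u\<in>V - S. \<exists>v\<in>S. (u, v) \<in> A)"

definition kernel :: "'a set \<Rightarrow> ('a \<times> 'a) set \<Rightarrow> 'a set \<Rightarrow> bool" where
  "kernel V A S \<longleftrightarrow> S \<subseteq> V \<and> stable A S \<and> absorbing V A S"

definition kernel_of_induced :: "('a \<times> 'a) set \<Rightarrow> 'a set \<Rightarrow> 'a set \<Rightarrow> bool" where
  "kernel_of_induced A W S \<longleftrightarrow> kernel W (induced_arcs A W) S"

definition clique :: "('a \<times> 'a) set \<Rightarrow> 'a set \<Rightarrow> bool" where
  "clique A C \<longleftrightarrow> (\<forall>u\<in>C. \<forall>v\<in>C. u \<noteq> v \<longrightarrow> adj A u v)"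

definition connected_induced :: "('a \<times> 'a) set \<Rightarrow> 'a set \<Rightarrow> bool" where
  "connected_induced A W \<longleftrightarrow> W \<noteq> {} \<and>
     (\<forall>X. X \<subseteq> W \<and> X \<noteq> {} \<and> X \<noteq> W \<longrightarrow> (\<exists>u\<in>X. \<exists>v\<in>W - X. adj A u v))"

definition disconnected_induced :: "('a \<times> 'a) set \<Rightarrow> 'a set \<Rightarrow> bool" where
  "disconnected_induced A W \<longleftrightarrow> \<not> connected_induced A W"

definition component_of_induced :: "('a \<times> 'a) set \<Rightarrow> 'a set \<Rightarrow> 'a set \<Rightarrow> bool" where
  "component_of_induced A W B \<longleftrightarrow> B \<subseteq> W \<and> connected_induced A B \<and>
     (\<forall>u\<in>B. \<forall>v\<in>W - B. \<not> adj A u v)"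

definition clique_cutset :: "'a set \<Rightarrow> ('a \<times> 'a) set \<Rightarrow> 'a set \<Rightarrow> bool" where
  "clique_cutset V A C \<longleftrightarrow> C \<subseteq> V \<and> clique A C \<and> disconnected_induced A (V - C)"

end

theory Submission
  imports Defs
begin

text \<open>Since C is a clique, a stable set meets C in at most one vertex. The sets Ks i \<inter> C are
  pairwise disjoint, so by pigeonhole one of the card C + 1 of them is empty; and if K contains
  a vertex c of C, then c lies in C \<inter> Ks i for some i \<le> card C. Either way some Ks i agrees with
  K on C. Two kernels of induced subdigraphs covering D that agree on C, and whose parts outside C
  (here B' and B) are nonadjacent, glue to a kernel of D.\<close>

lemma kernel_of_induced_iff:
  "kernel_of_induced A W S \<longleftrightarrow>
     S \<subseteq> W \<and> stable A S \<and> (\<forall>u\<in>W - S. \<exists>v\<in>S. (u, v) \<in> A)"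
  unfolding kernel_of_induced_def kernel_def absorbing_def stable_def adj_def induced_arcs_def
  by blast

lemma kernel_Un_of_induced_kernels:
  assumes K1: "kernel_of_induced A W1 K1" and K2: "kernel_of_induced A W2 K2"
    and cover: "W1 \<union> W2 = V"
    and separated: "\<forall>u\<in>W1 - X. \<forall>v\<in>W2 - X. \<not> adj A u v"
    and agree: "K1 \<inter> X = K2 \<inter> X"
  shows "kernel V A (K1 \<union> K2)"
proof -
  have sub: "K1 \<subseteq> W1" "K2 \<subseteq> W2" and st: "stable A K1" "stable A K2"
    and abs1: "\<forall>u\<in>W1 - K1. \<exists>v\<in>K1. (u, v) \<in> A"
    and abs2: "\<forall>u\<in>W2 - K2. \<exists>v\<in>K2. (u, v) \<in> A"
    using K1 K2 by (auto simp: kernel_of_induced_iff)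
  have cross: "\<not> adj A x y" if x: "x \<in> K1" and y: "y \<in> K2" for x y
  proof (cases "x \<in> X \<or> y \<in> X")
    case True
    then have "x \<in> K2 \<or> y \<in> K1" using x y agree by blast
    then show ?thesis using x y st unfolding stable_def by blast
  next
    case False
    then show ?thesis using x y sub separated by blast
  qed
  have "stable A (K1 \<union> K2)"
    using st cross unfolding stable_def adj_def by blast
  moreover have "\<forall>u\<in>V - (K1 \<union> K2). \<exists>v\<in>K1 \<union> K2. (u, v) \<in> A"
    using abs1 abs2 cover by blast
  ultimately show ?thesis
    using sub cover unfolding kernel_def absorbing_def by blast
qed

lemma stable_Int_clique_eq_singleton:
  assumes "stable A X" "clique A C" "c \<in> X" "c \<in> C"
  shows "X \<inter> C = {c}"
  using assms unfolding stable_def clique_def by blast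

lemma pigeonhole_empty_Int:
  assumes "finite C" "card C < n"
    and disjoint: "\<forall>i\<in>{1..n}. \<forall>j\<in>{1..<i}. Ks i \<inter> Ks j \<inter> C = {}"
  shows "\<exists>i\<in>{1..n}. Ks i \<inter> C = {}"
proof (rule ccontr)
  assume "\<not> ?thesis"
  then have "\<forall>i\<in>{1..n}. \<exists>x. x \<in> Ks i \<inter> C" by blast
  from bchoice[OF this] obtain f where f: "\<forall>i\<in>{1..n}. f i \<in> Ks i \<inter> C" ..
  have "f j \<noteq> f i" if "i \<in> {1..n}" "j \<in> {1..n}" "j < i" for i j
  proof -
    have "Ks i \<inter> Ks j \<inter> C = {}" using disjoint that by simp
    moreover have "f i \<in> Ks i \<inter> C" "f j \<in> Ks j \<inter> C" using f that by auto
    ultimately show ?thesis by (metis IntE IntI empty_iff)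
  qed
  then have "inj_on f {1..n}"
    by (metis inj_onI linorder_neqE_nat)
  moreover have "f ` {1..n} \<subseteq> C" using f by blast
  ultimately have "card {1..n} \<le> card C"
    using assms(1) by (rule card_inj_on_le)
  then show False using assms(2) by simp
qed

lemma exists_agreeing_on_clique:
  assumes "finite C" "clique A C" "stable A K"
    and K_C: "K \<inter> C \<subseteq> (\<Union>j\<in>{1..card C}. Ks j)"
    and Ks: "\<forall>i\<in>{1..card C + 1}. stable A (Ks i) \<and> Ks i \<inter> C \<subseteq> C - (\<Union>j\<in>{1..<i}. Ks j)"
  shows "\<exists>i\<in>{1..card C + 1}. K \<inter> C = Ks i \<inter> C"
proof (cases "K \<inter> C = {}")
  case True
  have "\<forall>i\<in>{1..card C + 1}. \<forall>j\<in>{1..<i}. Ks i \<inter> Ks j \<inter> C = {}"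
    using Ks by blast
  then have "\<exists>i\<in>{1..card C + 1}. Ks i \<inter> C = {}"
    by (rule pigeonhole_empty_Int[OF assms(1) lessI[of "card C", unfolded Suc_eq_plus1]])
  then show ?thesis using True by auto
next
  case False
  then obtain c where c: "c \<in> K" "c \<in> C" by blast
  then obtain i where i: "i \<in> {1..card C}" "c \<in> Ks i" using K_C by blast
  then have i': "i \<in> {1..card C + 1}" by simp
  have "K \<inter> C = {c}"
    by (rule stable_Int_clique_eq_singleton[OF assms(3,2) c])
  moreover have "Ks i \<inter> C = {c}"
    using Ks i' by (intro stable_Int_clique_eq_singleton[OF _ assms(2) i(2) c(2)]) blast
  ultimately show ?thesis using i' by auto
qed

theorem lemma1:
  fixes V :: "'a set" and A :: "('a \<times> 'a) set" and C B B' K :: "'a set"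
    and Ks :: "nat \<Rightarrow> 'a set"
  assumes "digraph V A"
    and "clique_cutset V A C"
    and "B \<union> B' = V - C" and "B \<inter> B' = {}"
    and "component_of_induced A (V - C) B"
    and "\<forall>i\<in>{1..card C + 1}.
           kernel_of_induced A (B \<union> (C - (\<Union>j\<in>{1..<i}. Ks j))) (Ks i)"
    and "kernel_of_induced A (B' \<union> (C \<inter> (\<Union>j\<in>{1..card C}. Ks j))) K"
  shows "\<exists>i\<in>{1..card C + 1}. kernel V A (K \<union> Ks i)"
proof -
  define W where "W i = B \<union> (C - (\<Union>j\<in>{1..<i}. Ks j))" for i
  define S where "S = C \<inter> (\<Union>j\<in>{1..card C}. Ks j)"
  have CV: "C \<subseteq> V" and clq: "clique A C" and fin: "finite C"
    using assms(1,2) finite_subset unfolding clique_cutset_def digraph_def by auto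
  have Ks: "kernel_of_induced A (W i) (Ks i)" if "i \<in> {1..card C + 1}" for i
    using assms(6) that unfolding W_def by blast
  have K: "kernel_of_induced A (B' \<union> S) K" using assms(7) unfolding S_def .
  have Ks_C: "\<forall>i\<in>{1..card C + 1}. stable A (Ks i) \<and> Ks i \<inter> C \<subseteq> C - (\<Union>j\<in>{1..<i}. Ks j)"
    using Ks assms(3) unfolding kernel_of_induced_iff W_def by blast
  have K_C: "stable A K" "K \<inter> C \<subseteq> (\<Union>j\<in>{1..card C}. Ks j)"
    using K assms(3) unfolding kernel_of_induced_iff S_def by blast+
  obtain i where i: "i \<in> {1..card C + 1}" and agree: "K \<inter> C = Ks i \<inter> C"
    using exists_agreeing_on_clique[OF fin clq K_C Ks_C] ..
  have "(B' \<union> S) \<union> W i = V"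
    using i assms(3) CV unfolding S_def W_def by fastforce
  moreover have "\<forall>u\<in>(B' \<union> S) - C. \<forall>v\<in>W i - C. \<not> adj A u v"
    using assms(3,4,5) unfolding S_def W_def component_of_induced_def adj_def by blast
  ultimately have "kernel V A (K \<union> Ks i)"
    using kernel_Un_of_induced_kernels[OF K Ks[OF i]] agree by blast
  then show ?thesis using i by blast
qed

end
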